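(* Let $C$ be a Cantor fan and let $L\subseteq C$ be a subcontinuum of $C$ that is a Lelek fan. Then $L$ is nowhere dense in $C$, i.e. $\mathrm{Int}_C(\mathrm{Cl}_C(L))=\emptyset$.
   Context: A continuum is a nonempty compact connected metric space. A dendroid is an arcwise connected, hereditarily unicoherent continuum. A point $x$ of a dendroid $X$ is a ramification point if $x$ is the top (the branch point) of some simple triod in $X$. A fan is a dendroid with at most one ramification point; this point, if it exists, is called the top of the fan. For a fan $X$, a point $x$ is an end point of $X$ if $x$ is an end point of every arc in $X$ containing $x$; $E(X)$ denotes the set of end points of $X$. A fan $X$ with top $v$ is smooth if for every $x\in X$ and every sequence $x_n\to x$ in $X$, the arcs from $v$ to $x_n$ converge (in the Hausdorff metric) to the arc from $v$ to $x$. A Lelek fan is a smooth fan $X$ with $\mathrm{Cl}(E(X))=X$. A Cantor fan is a continuum homeomorphic to $\bigcup_{c\in C}A_c\subseteq\mathbb R^2$, where $C\subseteq[0,1]$ is the Cantor middle-third set and $A_c$ is the straight segment from $(\tfrac12,0)$ to $(c,1)$. *)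

theory Defs
  imports "HOL-Analysis.Analysis"
begin

primrec cantor_level :: "nat \<Rightarrow> real set" where
  "cantor_level 0 = {0..1}"
| "cantor_level (Suc n) = (\<lambda>x. x / 3) ` cantor_level n \<union> (\<lambda>x. x / 3 + 2 / 3) ` cantor_level n"

definition cantor_set :: "real set" where
  "cantor_set = (\<Inter>n. cantor_level n)"

definition standard_cantor_fan :: "(real \<times> real) set" where
  "standard_cantor_fan = (\<Union>c\<in>cantor_set. closed_segment (1/2, 0) (c, 1))"

definition cantor_fan :: "'a::topological_space set \<Rightarrow> bool" where
  "cantor_fan X \<longleftrightarrow> X homeomorphic standard_cantor_fan"

definition continuum :: "'a::topological_space set \<Rightarrow> bool" where
  "continuum X \<longleftrightarrow> X \<noteq> {} \<and> compact X \<and> connected X"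

definition arc_in :: "'a::topological_space set \<Rightarrow> (real \<Rightarrow> 'a) \<Rightarrow> bool" where
  "arc_in X g \<longleftrightarrow> arc g \<and> path_image g \<subseteq> X"

definition arcwise_connected :: "'a::topological_space set \<Rightarrow> bool" where
  "arcwise_connected X \<longleftrightarrow>
     (\<forall>x\<in>X. \<forall>y\<in>X. x \<noteq> y \<longrightarrow> (\<exists>g. arc_in X g \<and> pathstart g = x \<and> pathfinish g = y))"

definition hereditarily_unicoherent :: "'a::topological_space set \<Rightarrow> bool" where
  "hereditarily_unicoherent X \<longleftrightarrow>
     (\<forall>A B. A \<subseteq> X \<longrightarrow> B \<subseteq> X \<longrightarrow> continuum A \<longrightarrow> continuum B \<longrightarrow> connected (A \<inter> B))"

definition dendroid :: "'a::topological_space set \<Rightarrow> bool" where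
  "dendroid X \<longleftrightarrow> continuum X \<and> arcwise_connected X \<and> hereditarily_unicoherent X"

text \<open>x is the top (branch point) of a simple triod in X: three arcs in X emanating
  from x, pairwise meeting only in x.\<close>
definition ramification_point :: "'a::topological_space set \<Rightarrow> 'a \<Rightarrow> bool" where
  "ramification_point X x \<longleftrightarrow>
     (\<exists>g1 g2 g3. arc_in X g1 \<and> arc_in X g2 \<and> arc_in X g3 \<and>
        pathstart g1 = x \<and> pathstart g2 = x \<and> pathstart g3 = x \<and>
        path_image g1 \<inter> path_image g2 = {x} \<and>
        path_image g1 \<inter> path_image g3 = {x} \<and>
        path_image g2 \<inter> path_image g3 = {x})"

definition fan :: "'a::topological_space set \<Rightarrow> bool" where
  "fan X \<longleftrightarrow> dendroid X \<and> (\<forall>x y. ramification_point X x \<longrightarrow> ramification_point X y \<longrightarrow> x = y)"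

definition end_points :: "'a::topological_space set \<Rightarrow> 'a set" where
  "end_points X = {x\<in>X. \<forall>g. arc_in X g \<and> x \<in> path_image g \<longrightarrow> x = pathstart g \<or> x = pathfinish g}"

text \<open>The (unique, in a dendroid) arc in X from v to x; the degenerate arc {v} if x = v.\<close>
definition arc_between :: "'a::topological_space set \<Rightarrow> 'a \<Rightarrow> 'a \<Rightarrow> 'a set" where
  "arc_between X v x =
     (if x = v then {v}
      else (THE A. \<exists>g. arc_in X g \<and> pathstart g = v \<and> pathfinish g = x \<and> A = path_image g))"

definition hausdorff_dist :: "'a::metric_space set \<Rightarrow> 'a set \<Rightarrow> real" where
  "hausdorff_dist A B = max (SUP a\<in>A. infdist a B) (SUP b\<in>B. infdist b A)"

definition smooth_fan :: "'a::metric_space set \<Rightarrow> 'a \<Rightarrow> bool" where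
  "smooth_fan X v \<longleftrightarrow> fan X \<and> ramification_point X v \<and>
     (\<forall>x\<in>X. \<forall>s::nat \<Rightarrow> 'a. (\<forall>n. s n \<in> X) \<longrightarrow> s \<longlonglongrightarrow> x \<longrightarrow>
        (\<lambda>n. hausdorff_dist (arc_between X v (s n)) (arc_between X v x)) \<longlonglongrightarrow> 0)"

definition lelek_fan :: "'a::metric_space set \<Rightarrow> bool" where
  "lelek_fan X \<longleftrightarrow> (\<exists>v. smooth_fan X v) \<and> closure (end_points X) = X"

end

theory Submission imports Defs begin

text \<open>A point of the Cantor fan of height strictly between 0 and 1 is an inner point of its
  spoke, and a short piece of that spoke stays inside any given neighbourhood. Hence every
  nonempty open set U of C contains a nonempty open set of points that are inner points of arcs
  in U. If U \<subseteq> L, none of these points is an end point of L, whereas the end points of a Lelek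
  fan are dense in it.\<close>

definition arc_interior_points :: "'a::topological_space set \<Rightarrow> 'a set" where
  "arc_interior_points X =
     {x. \<exists>g. arc_in X g \<and> x \<in> path_image g \<and> x \<noteq> pathstart g \<and> x \<noteq> pathfinish g}"

lemma arc_interior_points_subset: "arc_interior_points X \<subseteq> X"
  unfolding arc_interior_points_def arc_in_def by blast

lemma arc_interior_points_mono: "X \<subseteq> Y \<Longrightarrow> arc_interior_points X \<subseteq> arc_interior_points Y"
  unfolding arc_interior_points_def arc_in_def by blast

lemma end_points_Int_arc_interior_points: "end_points X \<inter> arc_interior_points X = {}"
  unfolding end_points_def arc_interior_points_def by blast

lemma arc_continuous_image:
  assumes "arc g" "continuous_on (path_image g) h" "inj_on h (path_image g)"
  shows "arc (h \<circ> g)"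
proof -
  have "inj_on (h \<circ> g) {0..1}"
    using assms(1,3) arc_imp_inj_on by (auto simp: path_image_def intro!: comp_inj_on)
  then show ?thesis
    using assms(1,2) path_continuous_image arc_imp_path by (auto simp: arc_def)
qed

lemma arc_interior_points_image:
  assumes "continuous_on X h" "inj_on h X"
  shows "h ` arc_interior_points X \<subseteq> arc_interior_points (h ` X)"
proof
  fix y assume "y \<in> h ` arc_interior_points X"
  then obtain g x where g: "arc g" "path_image g \<subseteq> X" and x: "x \<in> path_image g"
      "x \<noteq> pathstart g" "x \<noteq> pathfinish g" and y: "y = h x"
    unfolding arc_interior_points_def arc_in_def by blast
  have "arc (h \<circ> g)"
    using g continuous_on_subset[OF assms(1)] inj_on_subset[OF assms(2)]
    by (blast intro: arc_continuous_image)
  moreover have "path_image (h \<circ> g) \<subseteq> h ` X" "y \<in> path_image (h \<circ> g)"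
    using g(2) x(1) y by (auto simp: path_image_compose)
  moreover have "x \<in> X" "pathstart g \<in> X" "pathfinish g \<in> X"
    using g(2) x(1) pathstart_in_path_image pathfinish_in_path_image by blast+
  then have "y \<noteq> pathstart (h \<circ> g)" "y \<noteq> pathfinish (h \<circ> g)"
    using x y by (simp_all add: pathstart_compose pathfinish_compose inj_on_eq_iff[OF assms(2)])
  ultimately show "y \<in> arc_interior_points (h ` X)"
    unfolding arc_interior_points_def arc_in_def by blast
qed

lemma path_stays_in_openin:
  assumes "path g" "path_image g \<subseteq> S" "openin (top_of_set S) V" "t \<in> {0..1}" "g t \<in> V"
  obtains d where "d > 0" "\<And>s. s \<in> {0..1} \<Longrightarrow> dist s t < d \<Longrightarrow> g s \<in> V"
proof -
  have "continuous_on {0..1} g" "g \<in> {0..1} \<rightarrow> S"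
    using assms(1,2) by (auto simp: path_def path_image_def)
  then have "openin (top_of_set {0..1}) ({0..1} \<inter> g -` V)"
    using assms(3) by (rule continuous_openin_preimage)
  then obtain d where "d > 0" "\<And>s. s \<in> {0..1} \<Longrightarrow> dist s t < d \<Longrightarrow> s \<in> {0..1} \<inter> g -` V"
    using assms(4,5) unfolding openin_euclidean_subtopology_iff by blast
  then show ?thesis
    using that by blast
qed

lemma arc_inner_point_in_arc_interior_points:
  assumes "arc g" "path_image g \<subseteq> S" "openin (top_of_set S) V" "0 < t" "t < 1" "g t \<in> V"
  shows "g t \<in> arc_interior_points V"
proof -
  obtain d where d: "d > 0" "\<And>s. s \<in> {0..1} \<Longrightarrow> dist s t < d \<Longrightarrow> g s \<in> V"
    using path_stays_in_openin[OF arc_imp_path[OF assms(1)] assms(2,3) _ assms(6)] assms(4,5)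
    by auto
  define e where "e = min (d / 2) (min t (1 - t))"
  have e: "0 < e" "e < d" "e \<le> t" "e \<le> 1 - t"
    using d(1) assms(4,5) by (auto simp: e_def)
  define h where "h = g \<circ> linepath (t - e) (t + e)"
  have seg: "closed_segment (t - e) (t + e) = {t - e..t + e}" "{t - e..t + e} \<subseteq> {0..1}"
    using e by (auto simp: closed_segment_eq_real_ivl)
  have "continuous_on {t - e..t + e} g" "inj_on g {t - e..t + e}"
    using seg(2) arc_imp_path[OF assms(1)] arc_imp_inj_on[OF assms(1)]
    by (auto simp: path_def elim: continuous_on_subset inj_on_subset)
  then have "arc h"
    unfolding h_def using e(1) seg(1) by (intro arc_continuous_image) auto
  moreover have "path_image h \<subseteq> V"
    using e seg by (auto simp: h_def path_image_compose dist_real_def intro!: d(2))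
  moreover have "g t \<in> path_image h"
    using e seg by (auto simp: h_def path_image_compose)
  moreover have "g t \<noteq> pathstart h" "g t \<noteq> pathfinish h"
    using e assms(4,5) arc_imp_inj_on[OF assms(1)]
    by (auto simp: h_def pathstart_compose pathfinish_compose dest: inj_onD)
  ultimately show ?thesis
    unfolding arc_interior_points_def arc_in_def by blast
qed

lemma standard_cantor_fan_spoke:
  assumes "w \<in> standard_cantor_fan"
  obtains c where "c \<in> cantor_set" "w = linepath (1/2, 0) (c, 1) (snd w)" "snd w \<in> {0..1}"
proof -
  obtain c where "c \<in> cantor_set" "w \<in> closed_segment (1/2, 0) (c, 1)"
    using assms unfolding standard_cantor_fan_def by blast
  then show ?thesis
    using that by (auto simp: in_segment linepath_def)
qed

lemma path_image_spoke_subset: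
  "c \<in> cantor_set \<Longrightarrow> path_image (linepath (1/2, 0) (c, 1)) \<subseteq> standard_cantor_fan"
  unfolding standard_cantor_fan_def by auto

lemma snd_spoke [simp]: "snd (linepath (1/2, 0) (c, 1) t) = (t::real)"
  by (simp add: linepath_def)

lemma standard_cantor_fan_middle_arc_interior_points:
  assumes "openin (top_of_set standard_cantor_fan) V" "w \<in> V" "0 < snd w" "snd w < 1"
  shows "w \<in> arc_interior_points V"
proof -
  have "w \<in> standard_cantor_fan"
    using openin_imp_subset[OF assms(1)] assms(2) by blast
  then obtain c where c: "c \<in> cantor_set" "w = linepath (1/2, 0) (c, 1) (snd w)"
    by (rule standard_cantor_fan_spoke)
  have "arc (linepath (1/2, 0) (c, 1::real))"
    by (rule arc_linepath) simp
  from arc_inner_point_in_arc_interior_points[OF this path_image_spoke_subset[OF c(1)] assms(1),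
    of "snd w"]
  show ?thesis
    using assms(2-4) c(2)[symmetric] by simp
qed

lemma standard_cantor_fan_openin_meets_middle:
  assumes "openin (top_of_set standard_cantor_fan) V" "V \<noteq> {}"
  obtains w where "w \<in> V" "0 < snd w" "snd w < 1"
proof -
  obtain q where q: "q \<in> V"
    using assms(2) by blast
  then have "q \<in> standard_cantor_fan"
    using openin_imp_subset[OF assms(1)] by blast
  then obtain c where c: "c \<in> cantor_set" "q = linepath (1/2, 0) (c, 1) (snd q)" "snd q \<in> {0..1}"
    by (rule standard_cantor_fan_spoke)
  have "linepath (1/2, 0) (c, 1) (snd q) \<in> V"
    using q c(2)[symmetric] by simp
  then obtain d where d: "d > 0"
      "\<And>s. s \<in> {0..1} \<Longrightarrow> dist s (snd q) < d \<Longrightarrow> linepath (1/2, 0) (c, 1) s \<in> V"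
    using path_stays_in_openin[OF path_linepath path_image_spoke_subset[OF c(1)] assms(1) c(3)]
    by blast
  define s where "s = (if snd q \<le> 1/2 then snd q + min (d/2) (1/4) else snd q - min (d/2) (1/4))"
  have s: "0 < s" "s < 1" "dist s (snd q) < d"
    using c(3) d(1) by (auto simp: s_def dist_real_def)
  then have "linepath (1/2, 0) (c, 1) s \<in> V"
    using d(2) by simp
  then show ?thesis
    using that s by simp
qed

lemma standard_cantor_fan_openin_contains_arc_interior:
  assumes "openin (top_of_set standard_cantor_fan) V" "V \<noteq> {}"
  obtains W where "openin (top_of_set standard_cantor_fan) W" "W \<noteq> {}" "W \<subseteq> arc_interior_points V"
proof
  let ?W = "V \<inter> {w. 0 < snd w \<and> snd w < 1}"
  have "open {w :: real \<times> real. 0 < snd w \<and> snd w < 1}"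
    by (intro open_Collect_conj open_Collect_less continuous_intros)
  then show "openin (top_of_set standard_cantor_fan) ?W"
    using assms(1) by (simp add: openin_Int_open)
  show "?W \<noteq> {}"
    using standard_cantor_fan_openin_meets_middle[OF assms] by blast
  show "?W \<subseteq> arc_interior_points V"
    using standard_cantor_fan_middle_arc_interior_points[OF assms(1)] by blast
qed

lemma cantor_fan_openin_contains_arc_interior:
  assumes "cantor_fan C" "openin (top_of_set C) U" "U \<noteq> {}"
  obtains W where "openin (top_of_set C) W" "W \<noteq> {}" "W \<subseteq> arc_interior_points U"
proof -
  obtain f g where h: "homeomorphism C standard_cantor_fan f g"
    using assms(1) unfolding cantor_fan_def homeomorphic_def by blast
  have hg: "homeomorphism standard_cantor_fan C g f"
    using h by (rule homeomorphism_symD)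
  have UC: "U \<subseteq> C"
    by (rule openin_imp_subset[OF assms(2)])
  have "f ` U \<noteq> {}"
    using assms(3) by simp
  then obtain W where W: "openin (top_of_set standard_cantor_fan) W" "W \<noteq> {}"
      "W \<subseteq> arc_interior_points (f ` U)"
    by (rule standard_cantor_fan_openin_contains_arc_interior[OF homeomorphism_imp_open_map[OF h assms(2)]])
  have fU: "f ` U \<subseteq> standard_cantor_fan"
    using UC homeomorphism_image1[OF h] by blast
  have "inj_on g standard_cantor_fan"
    by (rule inj_onI) (metis homeomorphism_apply2[OF h])
  then have "g ` arc_interior_points (f ` U) \<subseteq> arc_interior_points (g ` f ` U)"
    using continuous_on_subset[OF homeomorphism_cont2[OF h] fU] inj_on_subset[OF _ fU]
    by (intro arc_interior_points_image)
  also have "g ` f ` U = U"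
  proof -
    have "\<And>x. x \<in> U \<Longrightarrow> g (f x) = x"
      using UC homeomorphism_apply1[OF h] by blast
    then show ?thesis
      by (simp add: image_image cong: image_cong)
  qed
  finally show ?thesis
    using that homeomorphism_imp_open_map[OF hg W(1)] W(2,3) by blast
qed

lemma openin_arc_interior_points_empty_if_end_points_dense:
  assumes "closure (end_points L) = L" "openin (top_of_set L) W" "W \<subseteq> arc_interior_points L"
  shows "W = {}"
proof -
  obtain T where T: "open T" "W = L \<inter> T"
    using assms(2) unfolding openin_open by blast
  have "end_points L \<subseteq> L"
    unfolding end_points_def by blast
  then have "T \<inter> end_points L = {}"
    using assms(3) T(2) end_points_Int_arc_interior_points by blast
  then show ?thesis
    using T assms(1) open_Int_closure_eq_empty by blast
qed

theorem mainTheorem3: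
  fixes C L :: "'a::metric_space set"
  assumes "cantor_fan C"
    and "L \<subseteq> C"
    and "continuum L"
    and "lelek_fan L"
  shows "(top_of_set C) interior_of ((top_of_set C) closure_of L) = {}"
proof (rule ccontr)
  have "closedin (top_of_set C) L"
    using assms(2,3) compact_imp_closed closed_subset unfolding continuum_def by blast
  moreover assume "(top_of_set C) interior_of ((top_of_set C) closure_of L) \<noteq> {}"
  ultimately obtain U where U: "openin (top_of_set C) U" "U \<noteq> {}" "U \<subseteq> L"
    unfolding interior_of_def by (auto simp: closure_of_closedin)
  obtain W where W: "openin (top_of_set C) W" "W \<noteq> {}" "W \<subseteq> arc_interior_points U"
    using cantor_fan_openin_contains_arc_interior[OF assms(1) U(1,2)] .
  have WL: "W \<subseteq> arc_interior_points L"
    using W(3) arc_interior_points_mono[OF U(3)] by blast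
  then have "openin (top_of_set L) W"
    using openin_subset_trans[OF W(1) _ assms(2)] arc_interior_points_subset by blast
  then show False
    using openin_arc_interior_points_empty_if_end_points_dense WL W(2) assms(4)
    unfolding lelek_fan_def by blast
qed

end
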